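(* Let $G^p_n$ be a random bipartite graph drawn from $G(n,n,p)$, and let $i_t(G^p_n)$ be the number of independent sets of size $t$ in $G^p_n$ ($0\le t\le n$). Say an event holds almost surely if its probability tends to $1$ as $n\to\infty$. \begin{enumerate} \item Fix $\delta>0$ and let $p$ satisfy $p\ge \delta$. Then almost surely the sequence $(i_t(G^p_n))_{t\ge 0}$ is unimodal with mode $n/2$. Moreover, there is a constant $C=C(p)$ such that almost surely the sequence $(i_t(G^p_n))_{t=[C\log n]}^{n}$ is log-concave. \item There are constants $C,D$ such that if $p\ge D n^{-1/2}\log^{1/2} n$ then almost surely the sequence $(i_t(G^p_n))_{t=[(C\log n)/p]}^{n}$ is unimodal with mode $n/2$, and moreover is log-concave. \item If $p\ge (\log n+\log\log n+\omega(1))/n$ then almost surely the sequence $(i_t(G^p_n))_{t=0}^{k}$ is increasing, where $k=\log n-2\log\log n$. \end{enumerate}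
   Context: $G(n,n,p)$ is the probability distribution on bipartite graphs with a fixed bipartition $\mathcal{E}\cup\mathcal{O}$, $|\mathcal{E}|=|\mathcal{O}|=n$, in which each of the $n^2$ pairs in $\mathcal{E}\times\mathcal{O}$ is an edge independently with probability $p$ (where $p=p(n)$ may depend on $n$). An independent set is a set of vertices spanning no edge. A sequence $(a_t)_{t=m}^{n}$ is unimodal with mode $k$ if $a_m\le a_{m+1}\le\dots\le a_k\ge a_{k+1}\ge\dots\ge a_n$; it is log-concave if $a_k^2\ge a_{k-1}a_{k+1}$ for all $m<k<n$. $[y]$ denotes the integer part of $y$; $\omega(1)$ denotes a function tending to infinity with $n$. *)

theory Defs
  imports Complex_Main
begin

text \<open>Vertices of the bipartite graph: the even class is \<open>Inl ` {..<n}\<close>,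
  the odd class is \<open>Inr ` {..<n}\<close>.  A bipartite graph on this bipartition
  is given by its edge set \<open>E \<subseteq> {..<n} \<times> {..<n}\<close>, where \<open>(i,j) \<in> E\<close>
  means that \<open>Inl i\<close> and \<open>Inr j\<close> are adjacent.\<close>

definition bip_vertices :: "nat \<Rightarrow> (nat + nat) set" where
  "bip_vertices n = Inl ` {..<n} \<union> Inr ` {..<n}"

definition bip_independent :: "nat \<Rightarrow> (nat \<times> nat) set \<Rightarrow> (nat + nat) set \<Rightarrow> bool" where
  "bip_independent n E S \<longleftrightarrow> S \<subseteq> bip_vertices n \<and>
     (\<forall>i j. (i, j) \<in> E \<longrightarrow> \<not> (Inl i \<in> S \<and> Inr j \<in> S))"

definition indep_count :: "nat \<Rightarrow> (nat \<times> nat) set \<Rightarrow> nat \<Rightarrow> nat" where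
  "indep_count n E t = card {S. bip_independent n E S \<and> card S = t}"

definition prob_Gnnp :: "nat \<Rightarrow> real \<Rightarrow> ((nat \<times> nat) set \<Rightarrow> bool) \<Rightarrow> real" where
  "prob_Gnnp n p P =
     (\<Sum>E \<in> {E. E \<subseteq> {..<n} \<times> {..<n} \<and> P E}.
        p ^ card E * (1 - p) ^ (n * n - card E))"

definition almost_surely :: "(nat \<Rightarrow> real) \<Rightarrow> (nat \<Rightarrow> (nat \<times> nat) set \<Rightarrow> bool) \<Rightarrow> bool" where
  "almost_surely p P \<longleftrightarrow> (\<lambda>n. prob_Gnnp n (p n) (P n)) \<longlonglongrightarrow> 1"

definition unimodal_mode :: "(nat \<Rightarrow> nat) \<Rightarrow> nat \<Rightarrow> nat \<Rightarrow> nat \<Rightarrow> bool" where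
  "unimodal_mode a m N k \<longleftrightarrow> m \<le> k \<and> k \<le> N \<and>
     (\<forall>t. m \<le> t \<and> t < k \<longrightarrow> a t \<le> a (Suc t)) \<and>
     (\<forall>t. k \<le> t \<and> t < N \<longrightarrow> a (Suc t) \<le> a t)"

text \<open>Unimodal with mode n/2 (for odd n: mode \<lfloor>n/2\<rfloor> or \<lceil>n/2\<rceil>).\<close>
definition unimodal_half :: "(nat \<Rightarrow> nat) \<Rightarrow> nat \<Rightarrow> nat \<Rightarrow> bool" where
  "unimodal_half a m n \<longleftrightarrow> unimodal_mode a m n (n div 2) \<or> unimodal_mode a m n ((n + 1) div 2)"

definition log_concave_on :: "(nat \<Rightarrow> nat) \<Rightarrow> nat \<Rightarrow> nat \<Rightarrow> bool" where
  "log_concave_on a m N \<longleftrightarrow> (\<forall>k. m < k \<and> k < N \<longrightarrow> a (k - 1) * a (k + 1) \<le> (a k)\<^sup>2)"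

end

theory Submission
  imports Defs "HOL-Real_Asymp.Real_Asymp"
begin

text \<open>
  An independent \<open>t\<close>-set is a pair \<open>(X, Y)\<close> of subsets of the two classes with no edge
  between them, and those with \<open>X\<close> or \<open>Y\<close> empty do not depend on the graph:
  \<open>i\<^sub>t = 2 binom(n,t) + M\<^sub>t\<close>, where \<open>M\<^sub>t\<close> counts the mixed ones.  The sequence
  \<open>2 binom(n,t)\<close> is unimodal with mode \<open>n/2\<close> and log-concave with a relative slack of order
  \<open>1/n\<close> in each step, so it suffices that \<open>3 n M\<^sub>t \<le> binom(n,t)\<close>.  The expectation of \<open>M\<^sub>t\<close>
  is \<open>\<Sum>\<^sub>a binom(n,a) binom(n,t-a) (1-p)\<^bsup>a(t-a)\<^esup>\<close>; once \<open>p t \<ge> 12 ln n\<close> every term is at most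
  \<open>binom(n,t)/n\<^sup>4\<close>, and Markov's inequality with a union bound over \<open>t\<close> gives the required
  bound almost surely.  For constant \<open>p\<close> the remaining \<open>t = O(log n)\<close> are handled by the
  cruder estimate \<open>E M\<^sub>t = O(t binom(n,t))\<close>, which still keeps \<open>i\<^sub>t\<close> increasing.  The third
  statement needs no randomness: for \<open>t \<le> ln n\<close>, \<open>i\<^sub>t \<le> binom(2n,t) < 2 binom(n,t+1) \<le> i\<^sub>t\<^sub>+\<^sub>1\<close>.
\<close>

section \<open>The random bipartite graph \<open>G(n,n,p)\<close>\<close>

lemma sum_Pow_power_card:
  fixes x y :: "'a::comm_semiring_1"
  assumes "finite A"
  shows "(\<Sum>X\<in>Pow A. x ^ card X * y ^ (card A - card X)) = (x + y) ^ card A"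
proof -
  have "(x + y) ^ card A = (\<Sum>X\<in>Pow A. (\<Prod>_\<in>X. x) * (\<Prod>_\<in>A - X. y))"
    using prod_add[OF assms, of "\<lambda>_. x" "\<lambda>_. y"] by simp
  also have "\<dots> = (\<Sum>X\<in>Pow A. x ^ card X * y ^ (card A - card X))"
  proof (rule sum.cong[OF refl])
    fix X assume "X \<in> Pow A"
    then have "finite X" "X \<subseteq> A" using assms finite_subset by auto
    then show "(\<Prod>_\<in>X. x) * (\<Prod>_\<in>A - X. y) = x ^ card X * y ^ (card A - card X)"
      by (simp add: card_Diff_subset)
  qed
  finally show ?thesis ..
qed

definition edge_pairs :: "nat \<Rightarrow> (nat \<times> nat) set" where
  "edge_pairs n = {..<n} \<times> {..<n}"

definition graph_weight :: "nat \<Rightarrow> real \<Rightarrow> (nat \<times> nat) set \<Rightarrow> real" where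
  "graph_weight n p E = p ^ card E * (1 - p) ^ (n * n - card E)"

definition expect_Gnnp :: "nat \<Rightarrow> real \<Rightarrow> ((nat \<times> nat) set \<Rightarrow> real) \<Rightarrow> real" where
  "expect_Gnnp n p X = (\<Sum>E\<in>Pow (edge_pairs n). graph_weight n p E * X E)"

lemma finite_edge_pairs [simp]: "finite (edge_pairs n)"
  by (simp add: edge_pairs_def)

lemma card_edge_pairs: "card (edge_pairs n) = n * n"
  by (simp add: edge_pairs_def card_cartesian_product)

lemma graph_weight_nonneg: "0 \<le> p \<Longrightarrow> p \<le> 1 \<Longrightarrow> 0 \<le> graph_weight n p E"
  by (simp add: graph_weight_def)

lemma prob_Gnnp_eq_sum: "prob_Gnnp n p P = (\<Sum>E\<in>{E\<in>Pow (edge_pairs n). P E}. graph_weight n p E)"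
  unfolding prob_Gnnp_def graph_weight_def edge_pairs_def by (rule sum.cong) auto

lemma prob_Gnnp_True: "prob_Gnnp n p (\<lambda>_. True) = 1"
  using sum_Pow_power_card[of "edge_pairs n" p "1 - p"]
  unfolding prob_Gnnp_eq_sum graph_weight_def card_edge_pairs
  by (simp only: simp_thms Collect_mem_eq) simp

lemma prob_Gnnp_nonneg: "0 \<le> p \<Longrightarrow> p \<le> 1 \<Longrightarrow> 0 \<le> prob_Gnnp n p P"
  unfolding prob_Gnnp_eq_sum by (rule sum_nonneg) (simp add: graph_weight_nonneg)

lemma prob_Gnnp_compl: "prob_Gnnp n p P + prob_Gnnp n p (\<lambda>E. \<not> P E) = 1"
proof -
  have "prob_Gnnp n p P + prob_Gnnp n p (\<lambda>E. \<not> P E) = prob_Gnnp n p (\<lambda>_. True)"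
    unfolding prob_Gnnp_eq_sum
    by (subst sum.union_disjoint[symmetric]) (auto intro!: sum.cong)
  then show ?thesis by (simp add: prob_Gnnp_True)
qed

lemma prob_Gnnp_mono:
  assumes "0 \<le> p" "p \<le> 1" "\<And>E. E \<subseteq> edge_pairs n \<Longrightarrow> P E \<Longrightarrow> Q E"
  shows "prob_Gnnp n p P \<le> prob_Gnnp n p Q"
  unfolding prob_Gnnp_eq_sum
  by (rule sum_mono2) (use assms in \<open>auto simp: graph_weight_nonneg\<close>)

lemma prob_Gnnp_le_1: "0 \<le> p \<Longrightarrow> p \<le> 1 \<Longrightarrow> prob_Gnnp n p P \<le> 1"
  using prob_Gnnp_compl[of n p P] prob_Gnnp_nonneg[of p n "\<lambda>E. \<not> P E"] by linarith

lemma prob_Gnnp_disj_le: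
  assumes "0 \<le> p" "p \<le> 1"
  shows "prob_Gnnp n p (\<lambda>E. P E \<or> Q E) \<le> prob_Gnnp n p P + prob_Gnnp n p Q"
proof -
  have "prob_Gnnp n p (\<lambda>E. P E \<or> Q E) \<le>
      (\<Sum>E\<in>{E\<in>Pow (edge_pairs n). P E} \<union> {E\<in>Pow (edge_pairs n). Q E}. graph_weight n p E)"
    unfolding prob_Gnnp_eq_sum by (intro sum_mono2) (auto simp: graph_weight_nonneg assms)
  also have "\<dots> \<le> prob_Gnnp n p P + prob_Gnnp n p Q"
    unfolding prob_Gnnp_eq_sum
    by (subst sum_Un) (auto simp: graph_weight_nonneg assms intro!: sum_nonneg)
  finally show ?thesis .
qed

lemma prob_Gnnp_Bex_le:
  assumes "finite I" "0 \<le> p" "p \<le> 1"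
  shows "prob_Gnnp n p (\<lambda>E. \<exists>i\<in>I. P i E) \<le> (\<Sum>i\<in>I. prob_Gnnp n p (P i))"
  using assms(1)
proof (induction I rule: finite_induct)
  case empty
  then show ?case by (simp add: prob_Gnnp_def)
next
  case (insert i I)
  have "prob_Gnnp n p (\<lambda>E. \<exists>j\<in>insert i I. P j E)
      \<le> prob_Gnnp n p (P i) + prob_Gnnp n p (\<lambda>E. \<exists>j\<in>I. P j E)"
    using prob_Gnnp_disj_le[OF assms(2,3), of n "P i" "\<lambda>E. \<exists>j\<in>I. P j E"] by simp
  then show ?case using insert by simp
qed

lemma prob_Gnnp_Markov:
  assumes "0 \<le> p" "p \<le> 1" "0 < c" "\<And>E. 0 \<le> X E"
  shows "prob_Gnnp n p (\<lambda>E. c \<le> X E) \<le> expect_Gnnp n p X / c"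
proof -
  have "c * prob_Gnnp n p (\<lambda>E. c \<le> X E)
      = (\<Sum>E\<in>{E\<in>Pow (edge_pairs n). c \<le> X E}. graph_weight n p E * c)"
    by (simp add: prob_Gnnp_eq_sum sum_distrib_left mult.commute)
  also have "\<dots> \<le> (\<Sum>E\<in>{E\<in>Pow (edge_pairs n). c \<le> X E}. graph_weight n p E * X E)"
    by (rule sum_mono) (auto intro: mult_left_mono simp: graph_weight_nonneg assms)
  also have "\<dots> \<le> expect_Gnnp n p X"
    unfolding expect_Gnnp_def
    by (rule sum_mono2) (auto simp: graph_weight_nonneg assms intro!: mult_nonneg_nonneg)
  finally show ?thesis using assms(3) by (simp add: field_simps)
qed

lemma expect_Gnnp_card:
  assumes "finite S"
  shows "expect_Gnnp n p (\<lambda>E. real (card {s\<in>S. Q s E})) = (\<Sum>s\<in>S. prob_Gnnp n p (Q s))"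
proof -
  have "expect_Gnnp n p (\<lambda>E. real (card {s\<in>S. Q s E}))
      = (\<Sum>E\<in>Pow (edge_pairs n). \<Sum>s\<in>S. if Q s E then graph_weight n p E else 0)"
    unfolding expect_Gnnp_def
    by (intro sum.cong refl) (simp add: sum.inter_filter[OF assms, symmetric] mult.commute)
  also have "\<dots> = (\<Sum>s\<in>S. \<Sum>E\<in>Pow (edge_pairs n). if Q s E then graph_weight n p E else 0)"
    by (rule sum.swap)
  also have "\<dots> = (\<Sum>s\<in>S. prob_Gnnp n p (Q s))"
    unfolding prob_Gnnp_eq_sum by (intro sum.cong refl sum.inter_filter[symmetric]) simp
  finally show ?thesis .
qed

lemma prob_Gnnp_avoid:
  assumes "F \<subseteq> edge_pairs n"
  shows "prob_Gnnp n p (\<lambda>E. E \<inter> F = {}) = (1 - p) ^ card F"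
proof -
  have fin: "finite F" using finite_subset[OF assms] by simp
  have card_compl: "card (edge_pairs n) = card (edge_pairs n - F) + card F"
    using assms fin by (simp add: card_Diff_subset card_mono)
  have "prob_Gnnp n p (\<lambda>E. E \<inter> F = {})
      = (\<Sum>E\<in>Pow (edge_pairs n - F). graph_weight n p E)"
    unfolding prob_Gnnp_eq_sum by (intro sum.cong) auto
  also have "\<dots> = (\<Sum>E\<in>Pow (edge_pairs n - F).
      p ^ card E * (1 - p) ^ (card (edge_pairs n - F) - card E)) * (1 - p) ^ card F"
    unfolding sum_distrib_right
  proof (rule sum.cong[OF refl])
    fix E assume "E \<in> Pow (edge_pairs n - F)"
    then have "card E \<le> card (edge_pairs n - F)" by (simp add: card_mono)
    then have "n * n - card E = (card (edge_pairs n - F) - card E) + card F"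
      using card_compl card_edge_pairs[of n] by simp
    then show "graph_weight n p E
        = p ^ card E * (1 - p) ^ (card (edge_pairs n - F) - card E) * (1 - p) ^ card F"
      by (simp add: graph_weight_def power_add)
  qed
  also have "\<dots> = (1 - p) ^ card F"
    by (simp add: sum_Pow_power_card)
  finally show ?thesis .
qed

lemma almost_surely_if_bad_vanishes:
  assumes p: "\<And>n. 0 \<le> p n \<and> p n \<le> 1"
    and bad: "(\<lambda>n. prob_Gnnp n (p n) (B n)) \<longlonglongrightarrow> 0"
    and good: "\<forall>\<^sub>F n in sequentially. \<forall>E. E \<subseteq> edge_pairs n \<longrightarrow> \<not> B n E \<longrightarrow> G n E"
  shows "almost_surely p G"
  unfolding almost_surely_def
proof (rule tendsto_sandwich[of "\<lambda>n. 1 - prob_Gnnp n (p n) (B n)" _ _ "\<lambda>_. 1"])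
  show "\<forall>\<^sub>F n in sequentially. 1 - prob_Gnnp n (p n) (B n) \<le> prob_Gnnp n (p n) (G n)"
    using good
  proof eventually_elim
    case (elim n)
    have "prob_Gnnp n (p n) (\<lambda>E. \<not> B n E) \<le> prob_Gnnp n (p n) (G n)"
      by (rule prob_Gnnp_mono) (use p elim in auto)
    then show ?case using prob_Gnnp_compl[of n "p n" "B n"] by linarith
  qed
  show "\<forall>\<^sub>F n in sequentially. prob_Gnnp n (p n) (G n) \<le> 1"
    using prob_Gnnp_le_1 p by auto
  show "(\<lambda>n. 1 - prob_Gnnp n (p n) (B n)) \<longlonglongrightarrow> 1"
    using tendsto_diff[OF tendsto_const bad, of 1] by simp
qed simp

lemma almost_surely_if_eventually_always:
  assumes "\<And>n. 0 \<le> p n \<and> p n \<le> 1"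
    and "\<forall>\<^sub>F n in sequentially. \<forall>E. G n E"
  shows "almost_surely p G"
  by (rule almost_surely_if_bad_vanishes[where B = "\<lambda>_ _. False"])
    (use assms in \<open>auto simp: prob_Gnnp_def elim: eventually_mono\<close>)

lemma prob_Gnnp_tendsto_0:
  assumes "\<And>n. 0 \<le> p n \<and> p n \<le> 1"
    and "\<forall>\<^sub>F n in sequentially. prob_Gnnp n (p n) (B n) \<le> f n" and "f \<longlonglongrightarrow> 0"
  shows "(\<lambda>n. prob_Gnnp n (p n) (B n)) \<longlonglongrightarrow> 0"
  by (rule tendsto_sandwich[OF _ assms(2) tendsto_const assms(3)])
    (use prob_Gnnp_nonneg assms(1) in auto)

section \<open>Independent sets as pairs of subsets\<close>

definition indep_pairs :: "nat \<Rightarrow> (nat \<times> nat) set \<Rightarrow> nat \<Rightarrow> (nat set \<times> nat set) set" where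
  "indep_pairs n E t =
     {(X, Y). X \<subseteq> {..<n} \<and> Y \<subseteq> {..<n} \<and> card X + card Y = t \<and> E \<inter> X \<times> Y = {}}"

definition mixed_pairs :: "nat \<Rightarrow> nat \<Rightarrow> (nat set \<times> nat set) set" where
  "mixed_pairs n t =
     {(X, Y). X \<subseteq> {..<n} \<and> Y \<subseteq> {..<n} \<and> card X + card Y = t \<and> X \<noteq> {} \<and> Y \<noteq> {}}"

definition mixed_count :: "nat \<Rightarrow> (nat \<times> nat) set \<Rightarrow> nat \<Rightarrow> nat" where
  "mixed_count n E t = card {XY \<in> mixed_pairs n t. E \<inter> fst XY \<times> snd XY = {}}"

lemma finite_mixed_pairs: "finite (mixed_pairs n t)"
  by (rule finite_subset[of _ "Pow {..<n} \<times> Pow {..<n}"]) (auto simp: mixed_pairs_def)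

lemma card_fst_mixed_pairs:
  assumes "XY \<in> mixed_pairs n t"
  shows "card (fst XY) \<in> {1..<t}"
proof -
  obtain X Y where XY: "XY = (X, Y)" by fastforce
  with assms have "finite X" "finite Y"
    by (auto simp: mixed_pairs_def intro: finite_subset)
  then show ?thesis
    using assms XY by (auto simp: mixed_pairs_def Suc_le_eq card_gt_0_iff)
qed

lemma indep_count_eq_card_indep_pairs: "indep_count n E t = card (indep_pairs n E t)"
proof -
  define join :: "nat set \<times> nat set \<Rightarrow> (nat + nat) set" where
    "join = (\<lambda>(X, Y). Inl ` X \<union> Inr ` Y)"
  define split :: "(nat + nat) set \<Rightarrow> nat set \<times> nat set" where
    "split S = ({i. Inl i \<in> S}, {j. Inr j \<in> S})" for S
  have join_split: "join (split S) = S" for S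
  proof (rule set_eqI)
    show "v \<in> join (split S) \<longleftrightarrow> v \<in> S" for v
      by (cases v) (auto simp: join_def split_def)
  qed
  have card_join: "card (join (X, Y)) = card X + card Y" if "finite X" "finite Y" for X Y
    unfolding join_def prod.case using that by (subst card_Un_disjoint) (auto simp: card_image)
  have "bij_betw join (indep_pairs n E t) {S. bip_independent n E S \<and> card S = t}"
  proof (rule bij_betw_byWitness[where f' = split])
    show "\<forall>XY\<in>indep_pairs n E t. split (join XY) = XY"
      by (auto simp: join_def split_def)
    show "\<forall>S\<in>{S. bip_independent n E S \<and> card S = t}. join (split S) = S"
      by (simp add: join_split)
    show "join ` indep_pairs n E t \<subseteq> {S. bip_independent n E S \<and> card S = t}"
    proof clarify
      fix X Y assume XY: "(X, Y) \<in> indep_pairs n E t"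
      then have "finite X" "finite Y"
        by (auto simp: indep_pairs_def intro: finite_subset)
      with XY have "card (join (X, Y)) = t"
        by (simp add: card_join indep_pairs_def)
      moreover have "bip_independent n E (join (X, Y))"
        using XY by (auto simp: indep_pairs_def bip_independent_def bip_vertices_def join_def)
      ultimately show "bip_independent n E (join (X, Y)) \<and> card (join (X, Y)) = t" by simp
    qed
    show "split ` {S. bip_independent n E S \<and> card S = t} \<subseteq> indep_pairs n E t"
    proof (rule image_subsetI)
      fix S assume "S \<in> {S. bip_independent n E S \<and> card S = t}"
      then have S: "bip_independent n E S" "t = card S" by simp_all
      then have sub: "fst (split S) \<subseteq> {..<n}" "snd (split S) \<subseteq> {..<n}"
        by (auto simp: bip_independent_def bip_vertices_def split_def)
      then have "card S = card (fst (split S)) + card (snd (split S))"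
        using card_join[of "fst (split S)" "snd (split S)"] join_split[of S]
        by (simp add: finite_subset)
      then show "split S \<in> indep_pairs n E t"
        using S sub by (auto simp: indep_pairs_def bip_independent_def split_def)
    qed
  qed
  then show ?thesis
    unfolding indep_count_def by (simp add: bij_betw_same_card)
qed

lemma card_subsets_lessThan: "card {X. X \<subseteq> {..<n} \<and> card X = t} = n choose t"
  using n_subsets[of "{..<n}" t] by simp

lemma indep_count_decomp:
  assumes "1 \<le> t"
  shows "indep_count n E t = 2 * (n choose t) + mixed_count n E t"
proof -
  let ?Y = "(\<lambda>Y. ({} :: nat set, Y)) ` {Y. Y \<subseteq> {..<n} \<and> card Y = t}"
  let ?X = "(\<lambda>X. (X, {} :: nat set)) ` {X. X \<subseteq> {..<n} \<and> card X = t}"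
  let ?M = "{XY \<in> mixed_pairs n t. E \<inter> fst XY \<times> snd XY = {}}"
  have split: "indep_pairs n E t = (?Y \<union> ?X) \<union> ?M"
    by (auto simp: indep_pairs_def mixed_pairs_def)
  have fin: "finite ?Y" "finite ?X" "finite ?M"
    using finite_mixed_pairs by auto
  have "card (indep_pairs n E t) = card (?Y \<union> ?X) + card ?M"
    unfolding split by (rule card_Un_disjoint) (use fin in \<open>auto simp: mixed_pairs_def\<close>)
  also have "card (?Y \<union> ?X) = card ?Y + card ?X"
    by (rule card_Un_disjoint) (use fin assms in auto)
  finally have "card (indep_pairs n E t) = card ?Y + card ?X + card ?M" .
  moreover have "card ?Y = n choose t" "card ?X = n choose t"
    by (simp_all add: card_image inj_on_def card_subsets_lessThan)
  ultimately show ?thesis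
    by (simp add: indep_count_eq_card_indep_pairs mixed_count_def)
qed

lemma indep_count_0: "indep_count n E 0 = 1"
proof -
  have "indep_pairs n E 0 = {({}, {})}"
    by (auto simp: indep_pairs_def card_eq_0_iff finite_subset)
  then show ?thesis
    by (simp add: indep_count_eq_card_indep_pairs)
qed

lemma expect_mixed_count:
  "expect_Gnnp n p (\<lambda>E. real (mixed_count n E t))
     = (\<Sum>a\<in>{1..<t}. real (n choose a) * real (n choose (t - a)) * (1 - p) ^ (a * (t - a)))"
proof -
  have "expect_Gnnp n p (\<lambda>E. real (mixed_count n E t))
      = (\<Sum>XY\<in>mixed_pairs n t. (1 - p) ^ (card (fst XY) * card (snd XY)))"
    unfolding mixed_count_def expect_Gnnp_card[OF finite_mixed_pairs]
  proof (rule sum.cong[OF refl])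
    fix XY assume "XY \<in> mixed_pairs n t"
    then have "fst XY \<times> snd XY \<subseteq> edge_pairs n"
      by (auto simp: mixed_pairs_def edge_pairs_def)
    then show "prob_Gnnp n p (\<lambda>E. E \<inter> fst XY \<times> snd XY = {})
        = (1 - p) ^ (card (fst XY) * card (snd XY))"
      by (simp add: prob_Gnnp_avoid card_cartesian_product)
  qed
  also have "\<dots> = (\<Sum>a\<in>{1..<t}. \<Sum>XY\<in>{XY \<in> mixed_pairs n t. card (fst XY) = a}.
      (1 - p) ^ (card (fst XY) * card (snd XY)))"
    by (rule sum.group[OF finite_mixed_pairs, symmetric]) (auto dest: card_fst_mixed_pairs)
  also have "\<dots> = (\<Sum>a\<in>{1..<t}. real (n choose a) * real (n choose (t - a)) * (1 - p) ^ (a * (t - a)))"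
  proof (rule sum.cong[OF refl])
    fix a assume a: "a \<in> {1..<t}"
    let ?A = "{X. X \<subseteq> {..<n} \<and> card X = a}" and ?B = "{Y. Y \<subseteq> {..<n} \<and> card Y = t - a}"
    have eq: "{XY \<in> mixed_pairs n t. card (fst XY) = a} = ?A \<times> ?B"
      using a by (auto simp: mixed_pairs_def)
    have "(\<Sum>XY\<in>{XY \<in> mixed_pairs n t. card (fst XY) = a}.
        (1 - p) ^ (card (fst XY) * card (snd XY))) = (\<Sum>XY\<in>?A \<times> ?B. (1 - p) ^ (a * (t - a)))"
      unfolding eq by (intro sum.cong refl) auto
    also have "\<dots> = real (n choose a) * real (n choose (t - a)) * (1 - p) ^ (a * (t - a))"
      by (simp add: card_cartesian_product card_subsets_lessThan)
    finally show "(\<Sum>XY\<in>{XY \<in> mixed_pairs n t. card (fst XY) = a}.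
        (1 - p) ^ (card (fst XY) * card (snd XY)))
        = real (n choose a) * real (n choose (t - a)) * (1 - p) ^ (a * (t - a))" .
  qed
  finally show ?thesis .
qed

section \<open>Unimodality and log-concavity from few mixed independent sets\<close>

lemma Suc_times_choose_Suc: "Suc t * (n choose Suc t) = (n - t) * (n choose t)"
proof (cases n)
  case (Suc m)
  then have "Suc t * (n choose Suc t) = n * (m choose t)"
    using Suc_times_binomial[of t m] by simp
  also have "\<dots> = (n - t) * (n choose t)"
    using binomial_absorb_comp[of n t] Suc by simp
  finally show ?thesis .
qed simp

lemma Suc_times_choose_Suc_real:
  "t \<le> n \<Longrightarrow> (real t + 1) * real (n choose Suc t) = (real n - real t) * real (n choose t)"
proof -
  assume "t \<le> n"
  have "real (Suc t * (n choose Suc t)) = real ((n - t) * (n choose t))"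
    by (simp only: Suc_times_choose_Suc)
  with \<open>t \<le> n\<close> show ?thesis
    by (simp add: of_nat_diff algebra_simps)
qed

lemma indep_count_le_Suc:
  assumes t: "1 \<le> t" "2 * t + 1 \<le> n"
    and mixed: "Suc t * mixed_count n E t \<le> (n - 2 * t - 1) * (n choose t)"
  shows "indep_count n E t \<le> indep_count n E (Suc t)"
proof -
  have "Suc t * ((n choose t) + mixed_count n E t)
      \<le> Suc t * (n choose t) + (n - 2 * t - 1) * (n choose t)"
    using mixed by (simp only: add_mult_distrib2)
  also have "\<dots> = (n - t) * (n choose t)"
  proof -
    have "Suc t + (n - 2 * t - 1) = n - t"
      using t by simp
    then show ?thesis by (metis add_mult_distrib)
  qed
  also have "\<dots> = Suc t * (n choose Suc t)"
    by (simp only: Suc_times_choose_Suc)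
  finally have "(n choose t) + mixed_count n E t \<le> n choose Suc t"
    by (simp only: mult_le_cancel1)
  then show ?thesis
    using t by (simp add: indep_count_decomp)
qed

lemma indep_count_Suc_le:
  assumes t: "1 \<le> t" "n \<le> 2 * t + 1" "t < n"
    and mixed: "(n - t) * mixed_count n E (Suc t) \<le> (2 * t + 1 - n) * (n choose Suc t)"
  shows "indep_count n E (Suc t) \<le> indep_count n E t"
proof -
  have "(n - t) * ((n choose Suc t) + mixed_count n E (Suc t))
      \<le> (n - t) * (n choose Suc t) + (2 * t + 1 - n) * (n choose Suc t)"
    using mixed by (simp only: add_mult_distrib2)
  also have "\<dots> = Suc t * (n choose Suc t)"
  proof -
    have "(n - t) + (2 * t + 1 - n) = Suc t"
      using t by simp
    then show ?thesis by (metis add_mult_distrib)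
  qed
  also have "\<dots> = (n - t) * (n choose t)"
    by (simp only: Suc_times_choose_Suc)
  finally have "(n choose Suc t) + mixed_count n E (Suc t) \<le> n choose t"
    using t by (simp only: mult_le_cancel1)
  then show ?thesis
    using t by (simp add: indep_count_decomp)
qed

lemma unimodal_half_if_mono:
  fixes a :: "nat \<Rightarrow> nat"
  assumes m: "m \<le> n div 2"
    and inc: "\<And>t. m \<le> t \<Longrightarrow> 2 * t + 1 < n \<Longrightarrow> a t \<le> a (Suc t)"
    and dec: "\<And>t. m \<le> t \<Longrightarrow> t < n \<Longrightarrow> n < 2 * t + 1 \<Longrightarrow> a (Suc t) \<le> a t"
  shows "unimodal_half a m n"
proof (cases "even n")
  case True
  then have "unimodal_mode a m n (n div 2)"
    unfolding unimodal_mode_def using m by (auto intro!: inc dec elim!: evenE)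
  then show ?thesis by (simp add: unimodal_half_def)
next
  case False
  then obtain h where n: "n = 2 * h + 1" by (metis oddE)
  then have half: "n div 2 = h" "Suc n div 2 = Suc h"
    by simp_all
  have "unimodal_mode a m n h \<or> unimodal_mode a m n (Suc h)"
  proof (cases "a (Suc h) \<le> a h")
    case True
    have "unimodal_mode a m n h"
      unfolding unimodal_mode_def
    proof (intro conjI allI impI)
      show "a t \<le> a (Suc t)" if "m \<le> t \<and> t < h" for t
        using that n by (intro inc) auto
      show "a (Suc t) \<le> a t" if "h \<le> t \<and> t < n" for t
        using that True n m half by (cases "t = h") (auto intro: dec)
    qed (use m n in auto)
    then show ?thesis ..
  next
    case False
    have "unimodal_mode a m n (Suc h)"
      unfolding unimodal_mode_def
    proof (intro conjI allI impI)
      show "a t \<le> a (Suc t)" if "m \<le> t \<and> t < Suc h" for t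
        using that False n by (cases "t = h") (auto intro: inc)
      show "a (Suc t) \<le> a t" if "Suc h \<le> t \<and> t < n" for t
        using that n m half by (intro dec) auto
    qed (use m n in auto)
    then show ?thesis ..
  qed
  then show ?thesis
    using half by (simp add: unimodal_half_def)
qed

lemma log_concavity_slack:
  fixes k N :: real
  assumes "1 \<le> k" "k + 1 \<le> N"
  shows "(6 * N + 1)\<^sup>2 * (k * (N - k)) \<le> 36 * N\<^sup>2 * ((N - k + 1) * (k + 1))"
proof -
  have "(12 * N + 1) * (k * (N - k)) \<le> (12 * N + 1) * (N * N)"
    using assms by (intro mult_left_mono mult_mono) auto
  also have "\<dots> \<le> (36 * (N + 1)) * (N * N)"
    using assms by (intro mult_right_mono) auto
  finally show ?thesis
    by (simp add: power2_eq_square algebra_simps)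
qed

text \<open>The binomial coefficients satisfy \<open>b\<^sub>k\<^sup>2 \<ge> b\<^sub>k\<^sub>-\<^sub>1 b\<^sub>k\<^sub>+\<^sub>1\<close> with a relative margin of order
  \<open>1/N\<close>, which absorbs perturbations of relative size \<open>1/(3N)\<close>.\<close>
lemma log_concave_perturbed:
  fixes A B D x y z k N :: real
  assumes k: "1 \<le> k" "k + 1 \<le> N"
    and nonneg: "0 \<le> A" "0 \<le> B" "0 \<le> D" "0 \<le> x" "0 \<le> y" "0 \<le> z"
    and x: "3 * N * x \<le> A" and y: "3 * N * y \<le> D"
    and AB: "k * B = (N - k + 1) * A" and BD: "(k + 1) * D = (N - k) * B"
  shows "(2 * A + x) * (2 * D + y) \<le> (2 * B + z)\<^sup>2"
proof -
  have N: "0 < N" and P: "0 < (N - k + 1) * (k + 1)"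
    using k by simp_all
  have "3 * N * (2 * A + x) \<le> (6 * N + 1) * A" "3 * N * (2 * D + y) \<le> (6 * N + 1) * D"
    using x y by (simp_all add: algebra_simps)
  then have "(3 * N * (2 * A + x)) * (3 * N * (2 * D + y)) \<le> ((6 * N + 1) * A) * ((6 * N + 1) * D)"
    by (rule mult_mono) (use nonneg N in auto)
  then have "9 * N\<^sup>2 * ((2 * A + x) * (2 * D + y)) * ((N - k + 1) * (k + 1))
      \<le> (6 * N + 1)\<^sup>2 * (A * D) * ((N - k + 1) * (k + 1))"
    using P by (intro mult_right_mono) (auto simp: power2_eq_square algebra_simps)
  also have "\<dots> = (6 * N + 1)\<^sup>2 * (k * (N - k)) * B\<^sup>2"
  proof -
    have "(A * D) * ((N - k + 1) * (k + 1)) = ((N - k + 1) * A) * ((k + 1) * D)"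
      by (simp only: mult_ac)
    also have "\<dots> = (k * (N - k)) * B\<^sup>2"
      by (simp only: AB [symmetric] BD) (simp add: power2_eq_square mult_ac)
    finally show ?thesis by (simp only: mult.assoc)
  qed
  also have "\<dots> \<le> 36 * N\<^sup>2 * ((N - k + 1) * (k + 1)) * B\<^sup>2"
    using log_concavity_slack[OF k] by (intro mult_right_mono) auto
  finally have "(9 * N\<^sup>2 * ((N - k + 1) * (k + 1))) * ((2 * A + x) * (2 * D + y))
      \<le> (9 * N\<^sup>2 * ((N - k + 1) * (k + 1))) * (4 * B\<^sup>2)"
    by (simp add: algebra_simps)
  then have "(2 * A + x) * (2 * D + y) \<le> 4 * B\<^sup>2"
    using P N by (subst (asm) mult_le_cancel_left_pos) auto
  also have "\<dots> \<le> (2 * B + z)\<^sup>2"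
    using nonneg by (simp add: power2_eq_square algebra_simps)
  finally show ?thesis .
qed

definition few_mixed :: "nat \<Rightarrow> (nat \<times> nat) set \<Rightarrow> nat \<Rightarrow> bool" where
  "few_mixed n E m \<longleftrightarrow> (\<forall>t\<in>{m..n}. 3 * n * mixed_count n E t \<le> n choose t)"

lemma log_concave_on_if_few_mixed:
  assumes m: "1 \<le> m" and few: "few_mixed n E m"
  shows "log_concave_on (indep_count n E) m n"
  unfolding log_concave_on_def
proof (intro allI impI)
  fix k assume k: "m < k \<and> k < n"
  define j where "j = k - 1"
  have j: "k = Suc j" "1 \<le> j"
    using k m by (auto simp: j_def)
  let ?M = "\<lambda>s. real (mixed_count n E s)"
  have small: "3 * real n * ?M s \<le> real (n choose s)" if "m \<le> s" "s \<le> n" for s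
  proof -
    have "3 * n * mixed_count n E s \<le> n choose s"
      using few that by (auto simp: few_mixed_def)
    then have "real (3 * n * mixed_count n E s) \<le> real (n choose s)"
      by (simp only: of_nat_le_iff)
    then show ?thesis by simp
  qed
  have AB: "real k * real (n choose k) = (real n - real k + 1) * real (n choose j)"
    using Suc_times_choose_Suc_real[of j n] j k by (simp add: algebra_simps)
  have BD: "(real k + 1) * real (n choose Suc k) = (real n - real k) * real (n choose k)"
    using Suc_times_choose_Suc_real[of k n] k by simp
  have "(2 * real (n choose j) + ?M j) * (2 * real (n choose Suc k) + ?M (Suc k))
      \<le> (2 * real (n choose k) + ?M k)\<^sup>2"
    by (rule log_concave_perturbed[OF _ _ _ _ _ _ _ _ small small AB BD]) (use k j in auto)
  then have "real ((2 * (n choose j) + mixed_count n E j) * (2 * (n choose Suc k) + mixed_count n E (Suc k)))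
      \<le> real ((2 * (n choose k) + mixed_count n E k)\<^sup>2)"
    by simp
  then have "(2 * (n choose j) + mixed_count n E j) * (2 * (n choose Suc k) + mixed_count n E (Suc k))
      \<le> (2 * (n choose k) + mixed_count n E k)\<^sup>2"
    by (simp only: of_nat_le_iff)
  then show "indep_count n E (k - 1) * indep_count n E (k + 1) \<le> (indep_count n E k)\<^sup>2"
    using j by (simp add: indep_count_decomp)
qed

lemma indep_count_le_Suc_if_few_mixed:
  assumes "1 \<le> m" "few_mixed n E m" "m \<le> t" "2 * t + 1 < n"
  shows "indep_count n E t \<le> indep_count n E (Suc t)"
proof (rule indep_count_le_Suc)
  have "Suc t * mixed_count n E t \<le> 3 * n * mixed_count n E t"
    using assms by (intro mult_right_mono) auto
  also have "\<dots> \<le> n choose t"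
    using assms by (auto simp: few_mixed_def)
  also have "\<dots> \<le> (n - 2 * t - 1) * (n choose t)"
    using assms by simp
  finally show "Suc t * mixed_count n E t \<le> (n - 2 * t - 1) * (n choose t)" .
qed (use assms in auto)

lemma indep_count_Suc_le_if_few_mixed:
  assumes "1 \<le> m" "few_mixed n E m" "m \<le> t" "t < n" "n < 2 * t + 1"
  shows "indep_count n E (Suc t) \<le> indep_count n E t"
proof (rule indep_count_Suc_le)
  have "(n - t) * mixed_count n E (Suc t) \<le> 3 * n * mixed_count n E (Suc t)"
    by (intro mult_right_mono) auto
  also have "\<dots> \<le> n choose Suc t"
    using assms by (auto simp: few_mixed_def)
  also have "\<dots> \<le> (2 * t + 1 - n) * (n choose Suc t)"
    using assms by simp
  finally show "(n - t) * mixed_count n E (Suc t) \<le> (2 * t + 1 - n) * (n choose Suc t)" .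
qed (use assms in auto)

lemma unimodal_half_if_few_mixed:
  assumes "1 \<le> m" "m \<le> n div 2" "few_mixed n E m"
  shows "unimodal_half (indep_count n E) m n"
  using assms
  by (intro unimodal_half_if_mono indep_count_le_Suc_if_few_mixed indep_count_Suc_le_if_few_mixed)

definition mixed_small_below :: "nat \<Rightarrow> (nat \<times> nat) set \<Rightarrow> nat \<Rightarrow> bool" where
  "mixed_small_below n E m \<longleftrightarrow>
     (\<forall>t\<in>{1..<m}. Suc t * mixed_count n E t \<le> (n - 2 * t - 1) * (n choose t))"

lemma unimodal_half_0_if_few_mixed:
  assumes m: "1 \<le> m" "2 * m \<le> n" and few: "few_mixed n E m"
    and below: "mixed_small_below n E m"
  shows "unimodal_half (indep_count n E) 0 n"
proof (rule unimodal_half_if_mono)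
  fix t assume t: "2 * t + 1 < n"
  consider "t = 0" | "1 \<le> t" "t < m" | "m \<le> t" by linarith
  then show "indep_count n E t \<le> indep_count n E (Suc t)"
  proof cases
    case 1
    then show ?thesis
      using t by (simp add: indep_count_0 indep_count_decomp)
  next
    case 2
    then show ?thesis
      using t below by (intro indep_count_le_Suc) (auto simp: mixed_small_below_def)
  next
    case 3
    then show ?thesis
      using t m few by (intro indep_count_le_Suc_if_few_mixed)
  qed
next
  fix t assume "t < n" "n < 2 * t + 1"
  then show "indep_count n E (Suc t) \<le> indep_count n E t"
    using m few by (intro indep_count_Suc_le_if_few_mixed) auto
qed simp

section \<open>Mixed independent sets when \<open>p t\<close> is large\<close>

lemma binomial_shift_le:
  assumes "b \<le> t" "t \<le> n"
  shows "(n choose (t - b)) * (n + 1 - t) ^ b \<le> t ^ b * (n choose t)"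
  using assms(1)
proof (induction b)
  case (Suc b)
  define s where "s = t - b"
  have s: "1 \<le> s" "s \<le> t" "t - Suc b = s - 1"
    using Suc.prems by (auto simp: s_def)
  have step: "s * (n choose s) = (n + 1 - s) * (n choose (s - 1))"
    using Suc_times_choose_Suc[of "s - 1" n] s assms by (simp add: Suc_diff_le)
  have "(n choose (t - Suc b)) * (n + 1 - t) ^ Suc b
      = ((n choose (s - 1)) * (n + 1 - t)) * (n + 1 - t) ^ b"
    by (simp add: s)
  also have "\<dots> \<le> ((n choose (s - 1)) * (n + 1 - s)) * (n + 1 - t) ^ b"
    using s by (intro mult_right_mono mult_left_mono) auto
  also have "\<dots> = s * ((n choose s) * (n + 1 - t) ^ b)"
    using step by (simp add: mult_ac)
  also have "\<dots> \<le> t * (t ^ b * (n choose t))"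
    by (rule mult_mono) (use Suc s in \<open>auto simp: s_def\<close>)
  finally show ?case by simp
qed simp

lemma binomial_product_le:
  fixes q :: real
  assumes q: "0 \<le> q" and b: "2 * b \<le> t" and t: "t \<le> n"
  shows "real (n choose b) * real (n choose (t - b)) * q ^ (b * (t - b)) * real (n + 1 - t) ^ b
         \<le> (real n * real t * q ^ (t - b)) ^ b * real (n choose t)"
proof -
  have choose_b: "real (n choose b) \<le> real n ^ b"
    using binomial_le_pow[of b n] b t by (simp flip: of_nat_power)
  have choose_t_b: "real (n choose (t - b)) * real (n + 1 - t) ^ b \<le> real t ^ b * real (n choose t)"
  proof -
    have "(n choose (t - b)) * (n + 1 - t) ^ b \<le> t ^ b * (n choose t)"
      using binomial_shift_le[of b t n] b t by simp
    then have "real ((n choose (t - b)) * (n + 1 - t) ^ b) \<le> real (t ^ b * (n choose t))"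
      by (simp only: of_nat_le_iff)
    then show ?thesis by simp
  qed
  have "real (n choose b) * (real (n choose (t - b)) * real (n + 1 - t) ^ b) * (q ^ (t - b)) ^ b
      \<le> real n ^ b * (real t ^ b * real (n choose t)) * (q ^ (t - b)) ^ b"
    by (rule mult_right_mono[OF mult_mono[OF choose_b choose_t_b]]) (use q in auto)
  then show ?thesis
    by (simp add: power_mult_distrib power_mult [symmetric] mult_ac)
qed

text \<open>Splitting a mixed \<open>t\<close>-set into its smaller side, of size \<open>b\<close>, and the rest: each of the
  \<open>b\<close> vertices costs a factor \<open>n t q\<^bsup>t-b\<^esup> / (n + 1 - t)\<close> relative to \<open>binom(n,t)\<close>.\<close>
lemma mixed_term_le:
  fixes q :: real
  assumes q: "0 \<le> q" and a: "1 \<le> a" "a < t" and t: "t \<le> n"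
  obtains b where "1 \<le> b" "2 * b \<le> t" "real t \<le> 2 * real (t - b)"
    and "real (n choose a) * real (n choose (t - a)) * q ^ (a * (t - a))
         \<le> (real n * real t * q ^ (t - b) / real (n + 1 - t)) ^ b * real (n choose t)"
proof
  let ?b = "min a (t - a)"
  show "1 \<le> ?b" "2 * ?b \<le> t" "real t \<le> 2 * real (t - ?b)"
    using a by auto
  have "real (n choose a) * real (n choose (t - a)) * q ^ (a * (t - a))
      = real (n choose ?b) * real (n choose (t - ?b)) * q ^ (?b * (t - ?b))"
    using a by (cases "a \<le> t - a") (auto simp: min_def mult_ac)
  then have "real (n choose a) * real (n choose (t - a)) * q ^ (a * (t - a)) * real (n + 1 - t) ^ ?b
      \<le> (real n * real t * q ^ (t - ?b)) ^ ?b * real (n choose t)"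
    using binomial_product_le[OF q \<open>2 * ?b \<le> t\<close> t] by simp
  moreover have "0 < real (n + 1 - t) ^ ?b"
    using t by simp
  ultimately show "real (n choose a) * real (n choose (t - a)) * q ^ (a * (t - a))
      \<le> (real n * real t * q ^ (t - ?b) / real (n + 1 - t)) ^ ?b * real (n choose t)"
    by (simp add: power_divide pos_le_divide_eq mult.commute mult.left_commute)
qed

lemma one_minus_power_le_exp_half:
  fixes p :: real
  assumes p: "0 \<le> p" "p \<le> 1" and st: "real t \<le> 2 * real s"
  shows "(1 - p) ^ s \<le> exp (- (p * real t / 2))"
proof -
  have "(1 - p) ^ s \<le> exp (- p) ^ s"
    using p exp_ge_add_one_self[of "- p"] by (intro power_mono) auto
  also have "\<dots> = exp (- (p * real s))"
    by (simp add: exp_of_nat_mult [symmetric] mult.commute)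
  also have "\<dots> \<le> exp (- (p * real t / 2))"
    using mult_left_mono[OF st p(1)] by simp
  finally show ?thesis .
qed

lemma mixed_term_le_large:
  fixes p :: real
  assumes p: "0 \<le> p" "p \<le> 1" and n: "1 \<le> n" and a: "1 \<le> a" "a < t" and t: "t \<le> n"
    and pt: "12 * ln (real n) \<le> p * real t"
  shows "real (n choose a) * real (n choose (t - a)) * (1 - p) ^ (a * (t - a))
    \<le> real (n choose t) / real n ^ 4"
proof -
  have q: "0 \<le> 1 - p" using p by simp
  obtain b where b: "1 \<le> b" "real t \<le> 2 * real (t - b)"
    and le: "real (n choose a) * real (n choose (t - a)) * (1 - p) ^ (a * (t - a))
         \<le> (real n * real t * (1 - p) ^ (t - b) / real (n + 1 - t)) ^ b * real (n choose t)"
    using mixed_term_le[OF q a t] by metis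
  define x where "x = real n * real t * (1 - p) ^ (t - b) / real (n + 1 - t)"
  have n_pos: "0 < real n" using n by simp
  have "(1 - p) ^ (t - b) \<le> exp (- (p * real t / 2))"
    using p b(2) by (rule one_minus_power_le_exp_half)
  also have "\<dots> \<le> exp (- (6 * ln (real n)))"
    using pt by simp
  also have "\<dots> = 1 / real n ^ 6"
  proof -
    have "exp (real 6 * ln (real n)) = exp (ln (real n)) ^ 6"
      by (rule exp_of_nat_mult)
    then show ?thesis
      using n_pos by (simp add: exp_minus divide_inverse)
  qed
  finally have q_pow: "(1 - p) ^ (t - b) \<le> 1 / real n ^ 6" .
  have "x \<le> real n * real t * (1 - p) ^ (t - b) / 1"
    unfolding x_def using q t by (intro divide_left_mono) auto
  also have "\<dots> \<le> real n * real n * (1 / real n ^ 6)"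
    using t q_pow q by (simp only: div_by_1) (intro mult_mono; simp)
  also have "\<dots> = 1 / real n ^ 4"
    using n_pos by (simp add: field_simps power_def)
  finally have x_le: "x \<le> 1 / real n ^ 4" .
  moreover have "0 \<le> x"
    using q by (simp add: x_def)
  moreover have "1 / real n ^ 4 \<le> 1"
    using n by simp
  ultimately have x_pow: "x ^ b \<le> 1 / real n ^ 4"
    using b power_decreasing[of 1 b x] by simp
  show ?thesis
    using order_trans[OF le[folded x_def] mult_right_mono[OF x_pow of_nat_0_le_iff]] by simp
qed

lemma expect_mixed_count_le_large:
  fixes p :: real
  assumes p: "0 \<le> p" "p \<le> 1" and n: "1 \<le> n" and t: "t \<le> n"
    and pt: "12 * ln (real n) \<le> p * real t"
  shows "expect_Gnnp n p (\<lambda>E. real (mixed_count n E t)) \<le> real (n choose t) / real n ^ 3"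
proof -
  have "expect_Gnnp n p (\<lambda>E. real (mixed_count n E t)) \<le> (\<Sum>a\<in>{1..<t}. real (n choose t) / real n ^ 4)"
    unfolding expect_mixed_count by (rule sum_mono) (use mixed_term_le_large[OF p n _ _ t pt] in auto)
  also have "\<dots> = real (t - 1) * (real (n choose t) / real n ^ 4)"
    by simp
  also have "\<dots> \<le> real n * (real (n choose t) / real n ^ 4)"
    using t by (intro mult_right_mono) auto
  also have "\<dots> = real (n choose t) / real n ^ 3"
    using n by (simp add: field_simps power_def)
  finally show ?thesis .
qed

lemma prob_not_few_mixed_at_le:
  fixes p :: real
  assumes p: "0 \<le> p" "p \<le> 1" and n: "1 \<le> n" and t: "t \<le> n"
    and pt: "12 * ln (real n) \<le> p * real t"
  shows "prob_Gnnp n p (\<lambda>E. \<not> 3 * n * mixed_count n E t \<le> n choose t) \<le> 3 / real n ^ 2"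
proof -
  let ?c = "real (n choose t) / (3 * real n)"
  have c: "0 < ?c" using n t by simp
  have "prob_Gnnp n p (\<lambda>E. \<not> 3 * n * mixed_count n E t \<le> n choose t)
      \<le> prob_Gnnp n p (\<lambda>E. ?c \<le> real (mixed_count n E t))"
  proof (rule prob_Gnnp_mono[OF p])
    fix E assume "\<not> 3 * n * mixed_count n E t \<le> n choose t"
    then have "real (n choose t) < real (3 * n * mixed_count n E t)"
      by (simp only: of_nat_less_iff not_le)
    then show "?c \<le> real (mixed_count n E t)"
      using n by (simp add: field_simps)
  qed
  also have "\<dots> \<le> expect_Gnnp n p (\<lambda>E. real (mixed_count n E t)) / ?c"
    by (rule prob_Gnnp_Markov[OF p c]) simp
  also have "\<dots> \<le> (real (n choose t) / real n ^ 3) / ?c"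
    using c by (intro divide_right_mono expect_mixed_count_le_large[OF p n t pt]) simp
  also have "\<dots> = 3 / real n ^ 2"
    using n t by (simp add: field_simps power_def)
  finally show ?thesis .
qed

lemma prob_not_few_mixed_le:
  fixes p :: real
  assumes p: "0 \<le> p" "p \<le> 1" and n: "1 \<le> n"
    and pt: "\<And>t. m \<le> t \<Longrightarrow> t \<le> n \<Longrightarrow> 12 * ln (real n) \<le> p * real t"
  shows "prob_Gnnp n p (\<lambda>E. \<not> few_mixed n E m) \<le> 3 * (real n + 1) / real n ^ 2"
proof -
  have "(\<lambda>E. \<not> few_mixed n E m) = (\<lambda>E. \<exists>t\<in>{m..n}. \<not> 3 * n * mixed_count n E t \<le> n choose t)"
    by (auto simp: few_mixed_def)
  then have "prob_Gnnp n p (\<lambda>E. \<not> few_mixed n E m)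
      \<le> (\<Sum>t\<in>{m..n}. prob_Gnnp n p (\<lambda>E. \<not> 3 * n * mixed_count n E t \<le> n choose t))"
    using prob_Gnnp_Bex_le[OF _ p, of "{m..n}" n "\<lambda>t E. \<not> 3 * n * mixed_count n E t \<le> n choose t"]
    by simp
  also have "\<dots> \<le> (\<Sum>t\<in>{m..n}. 3 / real n ^ 2)"
    by (rule sum_mono) (use prob_not_few_mixed_at_le[OF p n _ pt] in auto)
  also have "\<dots> = real (card {m..n}) * (3 / real n ^ 2)"
    by simp
  also have "\<dots> \<le> (real n + 1) * (3 / real n ^ 2)"
    by (intro mult_right_mono) auto
  finally show ?thesis by (simp add: algebra_simps)
qed

section \<open>Mixed independent sets of bounded size\<close>

text \<open>A bound on \<open>(2 t e\<^sup>-\<^sup>\<delta>\<^sup>t\<^sup>/\<^sup>2)\<^sup>b\<close> for \<open>b \<le> t\<close> that is uniform in \<open>t\<close>: for \<open>t \<ge> 16/\<delta>\<^sup>2\<close> the base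
  is at most \<open>1\<close>, otherwise both base and exponent are bounded.\<close>
definition small_t_const :: "real \<Rightarrow> real" where
  "small_t_const \<delta> = (2 * (16 / \<delta>\<^sup>2) + 1) ^ nat \<lceil>16 / \<delta>\<^sup>2\<rceil>"

lemma small_t_const_ge_1: "0 < \<delta> \<Longrightarrow> 1 \<le> small_t_const \<delta>"
  unfolding small_t_const_def by (intro one_le_power) simp

lemma power_le_small_t_const:
  fixes \<delta> x :: real
  assumes \<delta>: "0 < \<delta>" and t: "1 \<le> t" and b: "b \<le> t"
    and x: "0 \<le> x" "x \<le> 2 * real t * exp (- (\<delta> * real t / 2))"
  shows "x ^ b \<le> small_t_const \<delta>"
proof (cases "16 / \<delta>\<^sup>2 \<le> real t")
  case True
  have t_pos: "0 < real t" using t by simp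
  have "2 * real t * exp (- (\<delta> * real t / 2)) = 2 * real t / exp (\<delta> * real t / 2)"
    by (simp only: exp_minus divide_inverse)
  also have "\<dots> \<le> 2 * real t / ((\<delta> * real t / 2)\<^sup>2 / 2)"
  proof (rule divide_left_mono)
    have "0 \<le> \<delta> * real t / 2"
      using \<delta> by simp
    then show "(\<delta> * real t / 2)\<^sup>2 / 2 \<le> exp (\<delta> * real t / 2)"
      using exp_lower_Taylor_quadratic by fastforce
  qed (use \<delta> t_pos in auto)
  also have "\<dots> = 16 / (\<delta>\<^sup>2 * real t)"
    using \<delta> t_pos by (simp add: field_simps power2_eq_square)
  also have "\<dots> \<le> 1"
    using True \<delta> t_pos by (simp add: divide_le_eq mult.commute)
  finally have "x ^ b \<le> 1"
    using x by (simp add: power_le_one)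
  then show ?thesis
    using small_t_const_ge_1[OF \<delta>] by linarith
next
  case False
  have "exp (- (\<delta> * real t / 2)) \<le> 1"
    using \<delta> by simp
  then have "x \<le> 2 * real t"
    using x(2) mult_left_mono[of _ 1 "2 * real t"] by fastforce
  also have "\<dots> \<le> 2 * (16 / \<delta>\<^sup>2) + 1"
    using False by simp
  finally have "x ^ b \<le> (2 * (16 / \<delta>\<^sup>2) + 1) ^ b"
    using x(1) by (intro power_mono)
  also have "\<dots> \<le> small_t_const \<delta>"
    unfolding small_t_const_def
  proof (rule power_increasing)
    show "b \<le> nat \<lceil>16 / \<delta>\<^sup>2\<rceil>"
      using False b by linarith
  qed (use \<delta> in auto)
  finally show ?thesis .
qed

lemma mixed_term_le_small:
  fixes p \<delta> :: real
  assumes p: "0 < \<delta>" "\<delta> \<le> p" "p \<le> 1" and a: "1 \<le> a" "a < t" and t: "2 * t \<le> n"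
  shows "real (n choose a) * real (n choose (t - a)) * (1 - p) ^ (a * (t - a))
    \<le> small_t_const \<delta> * real (n choose t)"
proof -
  have q: "0 \<le> 1 - p" using p by simp
  have tn: "t \<le> n" using t by simp
  obtain b where b: "1 \<le> b" "2 * b \<le> t" "real t \<le> 2 * real (t - b)"
    and le: "real (n choose a) * real (n choose (t - a)) * (1 - p) ^ (a * (t - a))
         \<le> (real n * real t * (1 - p) ^ (t - b) / real (n + 1 - t)) ^ b * real (n choose t)"
    by (rule mixed_term_le[OF q a tn])
  define x where "x = real n * real t * (1 - p) ^ (t - b) / real (n + 1 - t)"
  have x: "0 \<le> x" using q by (simp add: x_def)
  have "x \<le> 2 * real t * (1 - p) ^ (t - b)"
  proof -
    have "real n \<le> 2 * real (n + 1 - t)"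
      using t by (simp add: of_nat_diff)
    then have "real n * (real t * (1 - p) ^ (t - b))
        \<le> 2 * real (n + 1 - t) * (real t * (1 - p) ^ (t - b))"
      using q by (intro mult_right_mono) auto
    moreover have "0 < real (n + 1 - t)"
      using t by simp
    ultimately show ?thesis
      unfolding x_def by (simp add: divide_le_eq algebra_simps)
  qed
  also have "\<dots> \<le> 2 * real t * exp (- (p * real t / 2))"
    using p b(3) by (intro mult_left_mono one_minus_power_le_exp_half) auto
  also have "\<dots> \<le> 2 * real t * exp (- (\<delta> * real t / 2))"
    using p mult_right_mono[OF p(2), of "real t"] by (intro mult_left_mono) auto
  finally have "x ^ b \<le> small_t_const \<delta>"
    using b a x by (intro power_le_small_t_const[OF p(1)]) auto
  then show ?thesis
    using order_trans[OF le[folded x_def] mult_right_mono] by simp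
qed

lemma expect_mixed_count_le_small:
  fixes p \<delta> :: real
  assumes p: "0 < \<delta>" "\<delta> \<le> p" "p \<le> 1" and t: "2 * t \<le> n"
  shows "expect_Gnnp n p (\<lambda>E. real (mixed_count n E t)) \<le> real t * small_t_const \<delta> * real (n choose t)"
proof -
  have "expect_Gnnp n p (\<lambda>E. real (mixed_count n E t))
      \<le> (\<Sum>a\<in>{1..<t}. small_t_const \<delta> * real (n choose t))"
    unfolding expect_mixed_count by (rule sum_mono) (use mixed_term_le_small[OF p _ _ t] in auto)
  also have "\<dots> = real (t - 1) * (small_t_const \<delta> * real (n choose t))"
    by simp
  also have "\<dots> \<le> real t * (small_t_const \<delta> * real (n choose t))"
    using small_t_const_ge_1[OF p(1)] by (intro mult_right_mono) auto
  finally show ?thesis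
    by (simp add: mult_ac)
qed

lemma prob_not_mixed_small_at_le:
  fixes p \<delta> :: real
  assumes p: "0 < \<delta>" "\<delta> \<le> p" "p \<le> 1" and t: "1 \<le> t" "4 * t + 2 \<le> n"
  shows "prob_Gnnp n p (\<lambda>E. \<not> Suc t * mixed_count n E t \<le> (n - 2 * t - 1) * (n choose t))
     \<le> 2 * real t * real (Suc t) * small_t_const \<delta> / real n"
proof -
  define r where "r = real (n - 2 * t - 1)"
  have r: "real n / 2 \<le> r" "0 < r"
    using t by (auto simp: r_def of_nat_diff)
  let ?c = "r * real (n choose t) / real (Suc t)"
  have c: "0 < ?c"
    using r t by simp
  have "prob_Gnnp n p (\<lambda>E. \<not> Suc t * mixed_count n E t \<le> (n - 2 * t - 1) * (n choose t))
      \<le> prob_Gnnp n p (\<lambda>E. ?c \<le> real (mixed_count n E t))"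
  proof (rule prob_Gnnp_mono)
    fix E assume "\<not> Suc t * mixed_count n E t \<le> (n - 2 * t - 1) * (n choose t)"
    then have "real ((n - 2 * t - 1) * (n choose t)) < real (Suc t * mixed_count n E t)"
      by (simp only: of_nat_less_iff not_le)
    then have "r * real (n choose t) < real (mixed_count n E t) * real (Suc t)"
      by (simp only: r_def of_nat_mult mult.commute)
    then show "?c \<le> real (mixed_count n E t)"
      by (subst pos_divide_le_eq) auto
  qed (use p in auto)
  also have "\<dots> \<le> expect_Gnnp n p (\<lambda>E. real (mixed_count n E t)) / ?c"
    by (rule prob_Gnnp_Markov[OF _ _ c]) (use p in auto)
  also have "\<dots> \<le> (real t * small_t_const \<delta> * real (n choose t)) / ?c"
    using c t by (intro divide_right_mono expect_mixed_count_le_small[OF p]) auto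
  also have "\<dots> = real t * small_t_const \<delta> * real (Suc t) / r"
    using r t by (simp add: field_simps)
  also have "\<dots> \<le> real t * small_t_const \<delta> * real (Suc t) / (real n / 2)"
    using r t small_t_const_ge_1[OF p(1)] by (intro divide_left_mono) auto
  also have "\<dots> = 2 * real t * real (Suc t) * small_t_const \<delta> / real n"
    by (simp add: field_simps)
  finally show ?thesis .
qed

lemma prob_not_mixed_small_below_le:
  fixes p \<delta> :: real
  assumes p: "0 < \<delta>" "\<delta> \<le> p" "p \<le> 1" and m: "4 * m + 2 \<le> n"
  shows "prob_Gnnp n p (\<lambda>E. \<not> mixed_small_below n E m) \<le> 2 * small_t_const \<delta> * real m ^ 3 / real n"
proof -
  let ?K = "small_t_const \<delta>"
  have K: "0 \<le> ?K"
    using small_t_const_ge_1[OF p(1)] by simp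
  have "(\<lambda>E. \<not> mixed_small_below n E m)
      = (\<lambda>E. \<exists>t\<in>{1..<m}. \<not> Suc t * mixed_count n E t \<le> (n - 2 * t - 1) * (n choose t))"
    by (auto simp: mixed_small_below_def)
  then have "prob_Gnnp n p (\<lambda>E. \<not> mixed_small_below n E m)
      \<le> (\<Sum>t\<in>{1..<m}. prob_Gnnp n p (\<lambda>E. \<not> Suc t * mixed_count n E t \<le> (n - 2 * t - 1) * (n choose t)))"
    using prob_Gnnp_Bex_le[of "{1..<m}" p n
        "\<lambda>t E. \<not> Suc t * mixed_count n E t \<le> (n - 2 * t - 1) * (n choose t)"] p
    by simp
  also have "\<dots> \<le> (\<Sum>t\<in>{1..<m}. 2 * ?K * real m ^ 2 / real n)"
  proof (rule sum_mono)
    fix t assume t: "t \<in> {1..<m}"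
    have "real t * real (Suc t) \<le> real m * real m"
      using t by (intro mult_mono) auto
    then have "2 * ?K * (real t * real (Suc t)) \<le> 2 * ?K * (real m * real m)"
      using K by (intro mult_left_mono) auto
    then have "2 * real t * real (Suc t) * ?K / real n \<le> 2 * ?K * real m ^ 2 / real n"
      by (intro divide_right_mono) (auto simp: power2_eq_square mult_ac)
    then show "prob_Gnnp n p (\<lambda>E. \<not> Suc t * mixed_count n E t \<le> (n - 2 * t - 1) * (n choose t))
        \<le> 2 * ?K * real m ^ 2 / real n"
      using prob_not_mixed_small_at_le[OF p, of t n] t m by auto
  qed
  also have "\<dots> = real (m - 1) * (2 * ?K * real m ^ 2 / real n)"
    by simp
  also have "\<dots> \<le> real m * (2 * ?K * real m ^ 2 / real n)"
    using K by (intro mult_right_mono) auto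
  also have "\<dots> = 2 * ?K * real m ^ 3 / real n"
    by (simp add: power_def mult_ac)
  finally show ?thesis .
qed

section \<open>The initial increase\<close>

lemma pow_le_fact_mult_choose: "k \<le> n \<Longrightarrow> (n + 1 - k) ^ k \<le> fact k * (n choose k)"
proof (induction k)
  case (Suc k)
  have "(n + 1 - Suc k) ^ Suc k = (n - k) * (n - k) ^ k"
    using Suc.prems by simp
  also have "\<dots> \<le> (n - k) * (fact k * (n choose k))"
    using Suc by (intro mult_left_mono order_trans[OF power_mono Suc.IH]) auto
  also have "\<dots> = fact k * (Suc k * (n choose Suc k))"
    by (simp only: Suc_times_choose_Suc mult_ac)
  also have "\<dots> = fact (Suc k) * (n choose Suc k)"
    by (simp add: algebra_simps)
  finally show ?case .
qed simp

lemma indep_count_le_choose: "indep_count n E t \<le> (2 * n) choose t"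
proof -
  have fin: "finite (bip_vertices n)"
    by (simp add: bip_vertices_def)
  have card: "card (bip_vertices n) = 2 * n"
    unfolding bip_vertices_def by (subst card_Un_disjoint) (auto simp: card_image)
  have "indep_count n E t \<le> card {S. S \<subseteq> bip_vertices n \<and> card S = t}"
    unfolding indep_count_def
    by (rule card_mono) (use fin in \<open>auto simp: bip_independent_def\<close>)
  also have "\<dots> = (2 * n) choose t"
    using n_subsets[OF fin, of t] card by simp
  finally show ?thesis .
qed

lemma two_power_le_powr:
  assumes "1 \<le> n" "real t \<le> ln (real n)"
  shows "(2::real) ^ t \<le> real n powr (3/4)"
proof -
  have "2 \<le> exp (3/4 :: real)"
    using exp_lower_Taylor_quadratic[of "3/4"] by (simp add: power2_eq_square)
  then have ln2: "ln 2 \<le> (3/4 :: real)"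
    by (metis exp_gt_zero ln_exp ln_le_cancel_iff zero_less_numeral)
  have "(2::real) ^ t = exp (real t * ln 2)"
    by (metis exp_ln exp_of_nat_mult zero_less_numeral)
  also have "\<dots> \<le> exp (ln (real n) * (3/4))"
    using assms ln2 by (intro exp_le_cancel_iff[THEN iffD2] mult_mono) auto
  also have "\<dots> = real n powr (3/4)"
    using assms by (simp add: powr_def mult.commute)
  finally show ?thesis .
qed

lemma fact_mult_choose_Suc_ge:
  assumes t: "t + 1 \<le> n"
  shows "real n ^ t * (real n - (real t + 1) * real t) \<le> fact (t + 1) * real (n choose (t + 1))"
proof -
  define N T where "N = real n" and "T = real t"
  have N: "0 < N" and T: "0 \<le> T" "T + 1 \<le> N"
    using t by (simp_all add: N_def T_def)
  have "real ((n - t) ^ (t + 1)) \<le> real (fact (t + 1) * (n choose (t + 1)))"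
    using pow_le_fact_mult_choose[of "t + 1" n] t by (simp only: of_nat_le_iff) simp
  then have choose: "(N - T) ^ (t + 1) \<le> fact (t + 1) * real (n choose (t + 1))"
    using t by (simp add: N_def T_def of_nat_diff algebra_simps)
  have "N ^ t * (N - (T + 1) * T) = N ^ (t + 1) * (1 + real (t + 1) * (- T / N))"
    using N by (simp add: T_def field_simps)
  also have "\<dots> \<le> N ^ (t + 1) * (1 + (- T / N)) ^ (t + 1)"
    using N T by (intro mult_left_mono Bernoulli_inequality) (auto simp: field_simps)
  also have "\<dots> = (N - T) ^ (t + 1)"
    using N by (simp add: power_mult_distrib [symmetric] field_simps)
  finally show ?thesis
    using choose by (simp add: N_def T_def)
qed

lemma choose_double_less_choose_Suc:
  assumes n: "1 \<le> n" and t: "t + 1 \<le> n" "real t \<le> ln (real n)"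
    and big: "(ln (real n) + 1) * real n powr (3/4) + 2 * ln (real n) * (ln (real n) + 1) < 2 * real n"
  shows "(2 * n) choose t < 2 * (n choose (t + 1))"
proof -
  define N T where "N = real n" and "T = real t"
  have N: "0 < N" and T: "0 \<le> T" "T \<le> ln N"
    using n t by (simp_all add: N_def T_def)
  have "real (((2 * n) choose t) * fact t) \<le> real ((2 * n) ^ t)"
    by (simp only: of_nat_le_iff binomial_fact_pow)
  then have "(T + 1) * (fact t * real ((2 * n) choose t)) \<le> (T + 1) * (2 ^ t * N ^ t)"
    using T by (intro mult_left_mono) (auto simp: N_def power_mult_distrib mult.commute)
  then have upper: "fact (t + 1) * real ((2 * n) choose t) \<le> (T + 1) * 2 ^ t * N ^ t"
    by (simp add: T_def algebra_simps)
  have "(T + 1) * 2 ^ t \<le> (ln N + 1) * N powr (3/4)"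
    using T two_power_le_powr[OF n t(2)] by (intro mult_mono) (auto simp: N_def)
  moreover have "(T + 1) * T \<le> (ln N + 1) * ln N"
    using T by (intro mult_mono) auto
  ultimately have "(T + 1) * 2 ^ t < 2 * (N - (T + 1) * T)"
    using big by (simp add: N_def algebra_simps)
  then have "fact (t + 1) * real ((2 * n) choose t) < fact (t + 1) * (2 * real (n choose (t + 1)))"
    using upper fact_mult_choose_Suc_ge[OF t(1)] N
      mult_strict_right_mono[of "(T + 1) * 2 ^ t" "2 * (N - (T + 1) * T)" "N ^ t"]
    by (simp add: N_def T_def algebra_simps)
  then show ?thesis
    by (simp only: mult_less_cancel_left_pos fact_gt_zero)
qed

lemma indep_count_less_Suc_eventually:
  "\<forall>\<^sub>F n in sequentially. \<forall>E t. real (Suc t) \<le> ln (real n) - 2 * ln (ln (real n)) \<longrightarrow>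
      indep_count n E t < indep_count n E (Suc t)"
proof -
  have "\<forall>\<^sub>F n in sequentially.
      (ln (real n) + 1) * real n powr (3/4) + 2 * ln (real n) * (ln (real n) + 1) < 2 * real n"
    by real_asymp
  moreover have "\<forall>\<^sub>F n in sequentially. exp 1 \<le> real n"
    by real_asymp
  ultimately show ?thesis
  proof eventually_elim
    case (elim n)
    have n_pos: "0 < real n"
      using elim(2) exp_gt_zero[of 1] by linarith
    then have n: "1 \<le> n" and ln_n: "1 \<le> ln (real n)"
      using elim(2) by (auto simp: ln_ge_iff)
    show ?case
    proof (intro allI impI)
      fix E t assume "real (Suc t) \<le> ln (real n) - 2 * ln (ln (real n))"
      moreover have "0 \<le> ln (ln (real n))" "ln (real n) < real n"
        using ln_n n_pos by (simp_all add: ln_less_self)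
      ultimately have "real t \<le> ln (real n)" "t + 1 \<le> n"
        by linarith+
      then have "indep_count n E t < 2 * (n choose (t + 1))"
        using choose_double_less_choose_Suc[OF n] elim(1) indep_count_le_choose[of n E t]
        by (meson order.strict_trans1)
      also have "\<dots> \<le> indep_count n E (Suc t)"
        by (simp add: indep_count_decomp)
      finally show "indep_count n E t < indep_count n E (Suc t)" .
    qed
  qed
qed

lemma nat_floor_threshold:
  fixes L p x :: real
  assumes L: "1 \<le> L" and p: "0 < p" "p \<le> 1" and px: "14 * L \<le> p * x"
  shows "1 \<le> nat \<lfloor>x\<rfloor>" and "nat \<lfloor>x\<rfloor> \<le> t \<Longrightarrow> 12 * L \<le> p * real t"
proof -
  have px14: "14 \<le> p * x" using L px by linarith
  then have "0 < x"
    using zero_less_mult_pos[of p x] p by simp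
  then have "p * x \<le> x"
    using mult_right_mono[OF p(2), of x] by simp
  with px14 have x: "14 \<le> x" by linarith
  then show "1 \<le> nat \<lfloor>x\<rfloor>" by linarith
  assume "nat \<lfloor>x\<rfloor> \<le> t"
  then have "x - 1 \<le> real t" using x by linarith
  then have "p * x - p \<le> p * real t"
    using p mult_left_mono[of "x - 1" "real t" p] by (simp add: right_diff_distrib)
  then show "12 * L \<le> p * real t"
    using px p L by linarith
qed

lemma LIMSEQ_linear_div_square: "(\<lambda>n. 3 * (real n + 1) / real n ^ 2) \<longlonglongrightarrow> 0"
  by real_asymp

lemma dense_threshold_eventually:
  fixes \<delta> :: real and p :: "nat \<Rightarrow> real"
  assumes \<delta>: "0 < \<delta>" and p: "\<And>n. \<delta> \<le> p n \<and> p n \<le> 1"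
  defines "m \<equiv> \<lambda>n. nat \<lfloor>14 / \<delta> * ln (real n)\<rfloor>"
  shows "\<forall>\<^sub>F n in sequentially. 1 \<le> n \<and> 1 \<le> m n \<and> 4 * m n + 2 \<le> n \<and>
      real (m n) \<le> 14 / \<delta> * ln (real n) \<and> (\<forall>t. m n \<le> t \<longrightarrow> 12 * ln (real n) \<le> p n * real t)"
proof -
  have "\<forall>\<^sub>F n in sequentially. 14 / \<delta> * ln (real n) \<le> real n / 8 - 1"
    using \<delta> by real_asymp
  moreover have "\<forall>\<^sub>F n in sequentially. exp 1 \<le> real n"
    by real_asymp
  ultimately show ?thesis
  proof eventually_elim
    case (elim n)
    have n: "0 < real n"
      using elim(2) exp_gt_zero[of 1] by linarith
    then have ln_n: "1 \<le> ln (real n)"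
      using elim(2) by (simp add: ln_ge_iff)
    have "14 * ln (real n) \<le> p n * (14 / \<delta> * ln (real n))"
      using p[of n] \<delta> ln_n by (simp add: field_simps mult_right_mono)
    note threshold = nat_floor_threshold[OF ln_n _ _ this]
    have m: "real (m n) \<le> 14 / \<delta> * ln (real n)"
      using \<delta> ln_n by (simp add: m_def)
    then have "real (4 * m n + 2) \<le> real n"
      using elim(1) by simp
    then have "4 * m n + 2 \<le> n"
      by (simp only: of_nat_le_iff)
    then show ?case
      using threshold m p[of n] \<delta> n by (auto simp: m_def)
  qed
qed

lemma prob_not_few_mixed_tendsto_0:
  fixes p :: "nat \<Rightarrow> real" and m :: "nat \<Rightarrow> nat"
  assumes p: "\<And>n. 0 \<le> p n \<and> p n \<le> 1"
    and large: "\<forall>\<^sub>F n in sequentially. \<forall>t. m n \<le> t \<longrightarrow> 12 * ln (real n) \<le> p n * real t"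
  shows "(\<lambda>n. prob_Gnnp n (p n) (\<lambda>E. \<not> few_mixed n E (m n))) \<longlonglongrightarrow> 0"
proof (rule prob_Gnnp_tendsto_0[OF p _ LIMSEQ_linear_div_square])
  show "\<forall>\<^sub>F n in sequentially. prob_Gnnp n (p n) (\<lambda>E. \<not> few_mixed n E (m n))
      \<le> 3 * (real n + 1) / real n ^ 2"
    using large eventually_ge_at_top[of 1]
  proof eventually_elim
    case (elim n)
    then show ?case
      using p[of n] by (intro prob_not_few_mixed_le) auto
  qed
qed

lemma prob_not_mixed_small_below_tendsto_0:
  fixes \<delta> C :: real and p :: "nat \<Rightarrow> real" and m :: "nat \<Rightarrow> nat"
  assumes \<delta>: "0 < \<delta>" and p: "\<And>n. \<delta> \<le> p n \<and> p n \<le> 1"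
    and m: "\<forall>\<^sub>F n in sequentially. 4 * m n + 2 \<le> n \<and> real (m n) \<le> C * ln (real n)"
  shows "(\<lambda>n. prob_Gnnp n (p n) (\<lambda>E. \<not> mixed_small_below n E (m n))) \<longlonglongrightarrow> 0"
proof (rule prob_Gnnp_tendsto_0)
  let ?K = "small_t_const \<delta>"
  show "0 \<le> p n \<and> p n \<le> 1" for n
    using p[of n] \<delta> by linarith
  show "\<forall>\<^sub>F n in sequentially. prob_Gnnp n (p n) (\<lambda>E. \<not> mixed_small_below n E (m n))
      \<le> 2 * ?K * C ^ 3 * (ln (real n) ^ 3 / real n)"
    using m
  proof eventually_elim
    case (elim n)
    have "prob_Gnnp n (p n) (\<lambda>E. \<not> mixed_small_below n E (m n)) \<le> 2 * ?K * real (m n) ^ 3 / real n"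
      using elim p[of n] by (intro prob_not_mixed_small_below_le[OF \<delta>]) auto
    also have "\<dots> \<le> 2 * ?K * (C * ln (real n)) ^ 3 / real n"
      using elim small_t_const_ge_1[OF \<delta>] by (intro divide_right_mono mult_left_mono power_mono) auto
    also have "\<dots> = 2 * ?K * C ^ 3 * (ln (real n) ^ 3 / real n)"
      by (simp only: power_mult_distrib mult.assoc times_divide_eq_right)
    finally show ?case .
  qed
  show "(\<lambda>n. 2 * ?K * C ^ 3 * (ln (real n) ^ 3 / real n)) \<longlonglongrightarrow> 0"
    by (intro tendsto_mult_right_zero) real_asymp
qed

lemma prob_Gnnp_disj_tendsto_0:
  assumes p: "\<And>n. 0 \<le> p n \<and> p n \<le> 1"
    and "(\<lambda>n. prob_Gnnp n (p n) (A n)) \<longlonglongrightarrow> 0" "(\<lambda>n. prob_Gnnp n (p n) (B n)) \<longlonglongrightarrow> 0"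
  shows "(\<lambda>n. prob_Gnnp n (p n) (\<lambda>E. A n E \<or> B n E)) \<longlonglongrightarrow> 0"
  using p
  by (rule prob_Gnnp_tendsto_0[OF _ _ tendsto_add_zero[OF assms(2,3)]])
    (use p in \<open>auto intro: always_eventually prob_Gnnp_disj_le\<close>)

theorem almost_surely_unimodal_log_concave_dense:
  fixes \<delta> :: real and p :: "nat \<Rightarrow> real"
  assumes \<delta>: "0 < \<delta>" and p: "\<And>n. \<delta> \<le> p n \<and> p n \<le> 1"
  shows "almost_surely p (\<lambda>n E. unimodal_half (indep_count n E) 0 n)"
    and "almost_surely p (\<lambda>n E. log_concave_on (indep_count n E) (nat \<lfloor>14 / \<delta> * ln (real n)\<rfloor>) n)"
proof -
  define m where "m n = nat \<lfloor>14 / \<delta> * ln (real n)\<rfloor>" for n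
  have p01: "0 \<le> p n \<and> p n \<le> 1" for n
    using p[of n] \<delta> by linarith
  have ev: "\<forall>\<^sub>F n in sequentially. 1 \<le> n \<and> 1 \<le> m n \<and> 4 * m n + 2 \<le> n \<and>
      real (m n) \<le> 14 / \<delta> * ln (real n) \<and> (\<forall>t. m n \<le> t \<longrightarrow> 12 * ln (real n) \<le> p n * real t)"
    using dense_threshold_eventually[OF \<delta> p] by (simp add: m_def)
  have few: "(\<lambda>n. prob_Gnnp n (p n) (\<lambda>E. \<not> few_mixed n E (m n))) \<longlonglongrightarrow> 0"
    using ev by (intro prob_not_few_mixed_tendsto_0[OF p01]) (auto elim: eventually_mono)
  have below: "(\<lambda>n. prob_Gnnp n (p n) (\<lambda>E. \<not> mixed_small_below n E (m n))) \<longlonglongrightarrow> 0"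
    using ev by (intro prob_not_mixed_small_below_tendsto_0[OF \<delta> p, where C = "14 / \<delta>"])
      (auto elim: eventually_mono)
  show "almost_surely p (\<lambda>n E. unimodal_half (indep_count n E) 0 n)"
  proof (rule almost_surely_if_bad_vanishes[OF p01 prob_Gnnp_disj_tendsto_0[OF p01 few below]])
    show "\<forall>\<^sub>F n in sequentially. \<forall>E. E \<subseteq> edge_pairs n \<longrightarrow>
        \<not> (\<not> few_mixed n E (m n) \<or> \<not> mixed_small_below n E (m n)) \<longrightarrow>
        unimodal_half (indep_count n E) 0 n"
      using ev
    proof eventually_elim
      case (elim n)
      then show ?case
        by (intro allI impI unimodal_half_0_if_few_mixed[where m = "m n"]) auto
    qed
  qed
  show "almost_surely p (\<lambda>n E. log_concave_on (indep_count n E) (nat \<lfloor>14 / \<delta> * ln (real n)\<rfloor>) n)"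
    unfolding m_def [symmetric]
  proof (rule almost_surely_if_bad_vanishes[OF p01 few])
    show "\<forall>\<^sub>F n in sequentially. \<forall>E. E \<subseteq> edge_pairs n \<longrightarrow> \<not> \<not> few_mixed n E (m n) \<longrightarrow>
        log_concave_on (indep_count n E) (m n) n"
      using ev
    proof eventually_elim
      case (elim n)
      then show ?case
        by (intro allI impI log_concave_on_if_few_mixed[where m = "m n"]) auto
    qed
  qed
qed

lemma sparse_threshold_eventually:
  fixes p :: "nat \<Rightarrow> real"
  assumes p: "\<And>n. p n \<le> 1"
    and p_ge: "\<forall>\<^sub>F n in sequentially. real n powr (-1/2) * sqrt (ln (real n)) \<le> p n"
  defines "m \<equiv> \<lambda>n. nat \<lfloor>14 * ln (real n) / p n\<rfloor>"
  shows "\<forall>\<^sub>F n in sequentially. 1 \<le> n \<and> 1 \<le> m n \<and> m n \<le> n div 2 \<and>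
      (\<forall>t. m n \<le> t \<longrightarrow> 12 * ln (real n) \<le> p n * real t)"
proof -
  have "\<forall>\<^sub>F n in sequentially. 14 * sqrt (ln (real n)) * sqrt (real n) \<le> real n / 2 - 1"
    by real_asymp
  moreover have "\<forall>\<^sub>F n in sequentially. exp 1 \<le> real n"
    by real_asymp
  ultimately show ?thesis
    using p_ge
  proof eventually_elim
    case (elim n)
    have n: "0 < real n"
      using elim(2) exp_gt_zero[of 1] by linarith
    then have ln_n: "1 \<le> ln (real n)"
      using elim(2) by (simp add: ln_ge_iff)
    have p_ge_n: "sqrt (ln (real n)) / sqrt (real n) \<le> p n"
      using elim(3) n by (simp add: powr_minus_divide powr_half_sqrt)
    have "0 < ln (real n)"
      using ln_n by linarith
    then have sqrt_pos: "0 < sqrt (ln (real n)) / sqrt (real n)"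
      using n by simp
    then have p_pos: "0 < p n"
      using p_ge_n by linarith
    have "14 * ln (real n) \<le> p n * (14 * ln (real n) / p n)"
      using p_pos by simp
    note threshold = nat_floor_threshold[OF ln_n p_pos p this]
    have "14 * ln (real n) / p n \<le> 14 * ln (real n) / (sqrt (ln (real n)) / sqrt (real n))"
      using p_ge_n sqrt_pos ln_n p_pos by (intro divide_left_mono mult_pos_pos) auto
    also have "\<dots> = 14 * sqrt (ln (real n)) * sqrt (real n)"
      using \<open>0 < ln (real n)\<close> by (simp add: field_simps)
    finally have "14 * ln (real n) / p n \<le> real n / 2 - 1"
      using elim(1) by linarith
    moreover have "real (m n) \<le> 14 * ln (real n) / p n"
      using p_pos ln_n by (simp add: m_def)
    ultimately have "real (m n) \<le> real n / 2 - 1"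
      by linarith
    then have "m n \<le> n div 2"
      by linarith
    then show ?case
      using threshold n by (auto simp: m_def)
  qed
qed

theorem almost_surely_unimodal_log_concave_sparse:
  fixes p :: "nat \<Rightarrow> real"
  assumes p01: "\<And>n. 0 \<le> p n \<and> p n \<le> 1"
    and p_ge: "\<forall>\<^sub>F n in sequentially. real n powr (-1/2) * sqrt (ln (real n)) \<le> p n"
  shows "almost_surely p (\<lambda>n E.
    unimodal_half (indep_count n E) (nat \<lfloor>14 * ln (real n) / p n\<rfloor>) n \<and>
    log_concave_on (indep_count n E) (nat \<lfloor>14 * ln (real n) / p n\<rfloor>) n)"
proof -
  define m where "m n = nat \<lfloor>14 * ln (real n) / p n\<rfloor>" for n
  have ev: "\<forall>\<^sub>F n in sequentially. 1 \<le> n \<and> 1 \<le> m n \<and> m n \<le> n div 2 \<and>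
      (\<forall>t. m n \<le> t \<longrightarrow> 12 * ln (real n) \<le> p n * real t)"
    using sparse_threshold_eventually[OF _ p_ge] p01 by (simp add: m_def)
  show ?thesis
    unfolding m_def [symmetric]
  proof (rule almost_surely_if_bad_vanishes[OF p01])
    show "(\<lambda>n. prob_Gnnp n (p n) (\<lambda>E. \<not> few_mixed n E (m n))) \<longlonglongrightarrow> 0"
      using ev by (intro prob_not_few_mixed_tendsto_0[OF p01]) (auto elim: eventually_mono)
    show "\<forall>\<^sub>F n in sequentially. \<forall>E. E \<subseteq> edge_pairs n \<longrightarrow> \<not> \<not> few_mixed n E (m n) \<longrightarrow>
        unimodal_half (indep_count n E) (m n) n \<and> log_concave_on (indep_count n E) (m n) n"
      using ev
    proof eventually_elim
      case (elim n)
      then show ?case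
        using unimodal_half_if_few_mixed log_concave_on_if_few_mixed by blast
    qed
  qed
qed

theorem mainTheorem1:
  shows
  "(\<forall>(\<delta>::real) (p::nat \<Rightarrow> real). \<delta> > 0 \<longrightarrow> (\<forall>n. \<delta> \<le> p n \<and> p n \<le> 1) \<longrightarrow>
      almost_surely p (\<lambda>n E. unimodal_half (indep_count n E) 0 n) \<and>
      (\<exists>C::real. almost_surely p
         (\<lambda>n E. log_concave_on (indep_count n E) (nat \<lfloor>C * ln (real n)\<rfloor>) n)))
   \<and>
   (\<exists>(C::real) (D::real). \<forall>p::nat \<Rightarrow> real. (\<forall>n. 0 \<le> p n \<and> p n \<le> 1) \<longrightarrow>
      (\<forall>\<^sub>F n in sequentially. p n \<ge> D * real n powr (-1/2) * sqrt (ln (real n))) \<longrightarrow>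
      almost_surely p (\<lambda>n E.
         unimodal_half (indep_count n E) (nat \<lfloor>C * ln (real n) / p n\<rfloor>) n \<and>
         log_concave_on (indep_count n E) (nat \<lfloor>C * ln (real n) / p n\<rfloor>) n))
   \<and>
   (\<forall>(p::nat \<Rightarrow> real) (w::nat \<Rightarrow> real). (\<forall>n. 0 \<le> p n \<and> p n \<le> 1) \<longrightarrow>
      filterlim w at_top sequentially \<longrightarrow>
      (\<forall>\<^sub>F n in sequentially. p n \<ge> (ln (real n) + ln (ln (real n)) + w n) / real n) \<longrightarrow>
      almost_surely p (\<lambda>n E. \<forall>t. real (Suc t) \<le> ln (real n) - 2 * ln (ln (real n)) \<longrightarrow>
         indep_count n E t < indep_count n E (Suc t)))"
  apply (intro conjI allI impI)
  subgoal for \<delta> p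
    by (rule almost_surely_unimodal_log_concave_dense(1)) auto
  subgoal for \<delta> p
    using almost_surely_unimodal_log_concave_dense(2)[of \<delta> p] by (intro exI[of _ "14 / \<delta>"]) auto
  subgoal
    using almost_surely_unimodal_log_concave_sparse by (intro exI[of _ 14] exI[of _ 1]) auto
  subgoal for p w
    by (rule almost_surely_if_eventually_always[OF _ indep_count_less_Suc_eventually]) auto
  done

end
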